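(* Let $v,k,t$ be integers with $v>k>t\ge 2$. Let $X$ be a $v$-set and let $X=X_1\cup X_2$ be a partition of $X$ with $|X_1|=v_1$ and $|X_2|=v_2$. For $i=0,\dots,t$ let $D_i=(X_1,\mathfrak B^{(i)})$ be the complete $i$-$(v_1,i,1)$ design (all $i$-subsets of $X_1$), and for $i=t+1,\dots,k$ let $D_i=(X_1,\mathfrak B^{(i)})$ be a simple $t$-$(v_1,i,\lambda^{(i)}_t)$ design. Similarly, for $i=0,\dots,t$ let $\bar D_i=(X_2,\bar{\mathfrak B}^{(i)})$ be the complete $i$-$(v_2,i,1)$ design, and for $i=t+1,\dots,k$ let $\bar D_i=(X_2,\bar{\mathfrak B}^{(i)})$ be a simple $t$-$(v_2,i,\bar\lambda^{(i)}_t)$ design. Let $K=\{(0,k),(1,k-1),\dots,(k-1,1),(k,0)\}$. Suppose there is a subset $R\subseteq K$ such that for each $(i,k-i)\in R$ the block set of $D_i$ is partitioned into $N_i$ classes $\mathfrak A^{(i)}_1,\dots,\mathfrak A^{(i)}_{N_i}$, each $(X_1,\mathfrak A^{(i)}_h)$ being an $s_i$-$(v_1,i,\lambda^{*(i)}_{s_i})$ design (same index for all $h$), with $s_i<t$, and the block set of $\bar D_{k-i}$ is partitioned into $\bar N_{k-i}$ classes $\bar{\mathfrak A}^{(k-i)}_1,\dots,\bar{\mathfrak A}^{(k-i)}_{\bar N_{k-i}}$, each $(X_2,\bar{\mathfrak A}^{(k-i)}_j)$ being an $s_{k-i}$-$(v_2,k-i,\bar\lambda^{*(k-i)}_{s_{k-i}})$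 design (same index for all $j$), with $s_{k-i}<t$, such that (i) $N_i=\bar N_{k-i}$, and (ii) $s_i+s_{k-i}\ge 2\lfloor t/2\rfloor$. For each $(i,k-i)\in R$ choose $\varepsilon_i\in\{0,1\}$ and an integer $w_i$ with $\varepsilon_i\le w_i\le\lfloor N_i/2\rfloor$, and set $$\mathfrak B^*_{(i,k-i)}=\{B_i\cup\bar B_{k-i}:\ B_i\in\mathfrak A^{(i)}_h,\ \bar B_{k-i}\in\bar{\mathfrak A}^{(k-i)}_j,\ \varepsilon_i\le d(h,j)\le w_i\},$$ where $d(h,j)=\min\{|h-j|,\,N_i-|h-j|\}$ for $h,j\in\{1,\dots,N_i\}$; and put $z_i=2w_i+1-\varepsilon_i$ if $w_i<N_i/2$, and $z_i=2w_i-\varepsilon_i$ if $w_i=N_i/2$. For each $(i,k-i)\in K\setminus R$ set $$\mathfrak B_{(i,k-i)}=\{B_i\cup\bar B_{k-i}:\ B_i\in\mathfrak B^{(i)},\ \bar B_{k-i}\in\bar{\mathfrak B}^{(k-i)}\}.$$ Choose $u_i\in\{0,1\}$ for $i=0,\dots,k$ and define $$\mathfrak B=\bigcup_{(i,k-i)\in R}\mathfrak B^*_{(i,k-i)}\times[u_i]\ \cup\bigcup_{(i,k-i)\in K\setminus R}\mathfrak B_{(i,k-i)}\times[u_i].$$ For $r=0,\dots,t$ define $$L_{r,t-r}=\sum_{(i,k-i)\in R}u_i\,\Lambda^{*(i,k-i)}_{(r,t-r)}+\sum_{(i,k-i)\in K\setminus R}u_i\,\lambda^{(i)}_r\,\bar\lambda^{(k-i)}_{t-r},$$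 where $$\Lambda^{*(i,k-i)}_{(r,t-r)}=\begin{cases}\lambda^{*(i)}_r\,\bar\lambda^{*(k-i)}_{t-r}\,N_i\,z_i & \text{if } r\le s_i,\ t-r\le s_{k-i},\\ \lambda^{*(i)}_r\,\bar\lambda^{(k-i)}_{t-r}\,z_i & \text{if } r\le s_i,\ t-r>s_{k-i},\\ \lambda^{(i)}_r\,\bar\lambda^{*(k-i)}_{t-r}\,z_i & \text{if } r>s_i,\ t-r\le s_{k-i}.\end{cases}$$ If $L_{0,t}=L_{1,t-1}=\dots=L_{t,0}=\Lambda$ for some positive integer $\Lambda$, then $(X,\mathfrak B)$ is a simple $t$-$(v,k,\Lambda)$ design.
   Context: A $t$-$(v,k,\lambda)$ design is a pair $(X,\mathfrak B)$ with $|X|=v$ and $\mathfrak B$ a collection of $k$-subsets (blocks) of $X$ such that every $t$-subset of $X$ lies in exactly $\lambda$ blocks; it is simple if no block is repeated. A $t$-$(v,k,\lambda)$ design is also an $s$-$(v,k,\lambda_s)$ design for $0\le s\le t$ with $\lambda_s=\lambda\binom{v-s}{t-s}/\binom{k-s}{t-s}$. Conventions: the $0$-$(v_1,0,1)$ design has exactly one block, the empty set; a design with $k$ equal to the number of points has the single block consisting of all points. Notation: $\lambda^{(i)}_r$ denotes the number of blocks of $D_i$ containing a given $r$-subset of $X_1$ (for $0\le r\le t$; it is $0$ when $r>i$), and $\bar\lambda^{(i)}_r$ the analogous number for $\bar D_i$ and $X_2$. For $r\le s_i$, $\lambda^{*(i)}_r$ denotes the number of blocks of a class $\mathfrak A^{(i)}_h$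 containing a given $r$-subset of $X_1$ (independent of $h$ and of the subset), and $\bar\lambda^{*(k-i)}_r$ (for $r\le s_{k-i}$) the analogous number for classes $\bar{\mathfrak A}^{(k-i)}_j$. For a set $Y$ and $u\in\{0,1\}$, $Y\times[0]=\emptyset$ and $Y\times[1]=Y$. *)

theory Defs
  imports Main
begin

text \<open>A (simple) t-(v,k,lambda) design on point set X with block set Bs:
  blocks are k-subsets of X (a set of blocks, hence no repeated blocks) and every
  t-subset of X lies in exactly lambda blocks.\<close>
definition is_design :: "'a set \<Rightarrow> nat \<Rightarrow> nat \<Rightarrow> nat \<Rightarrow> 'a set set \<Rightarrow> bool" where
  "is_design X k t lam Bs \<longleftrightarrow>
     finite X \<and> (\<forall>B\<in>Bs. B \<subseteq> X \<and> card B = k) \<and>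
     (\<forall>T. T \<subseteq> X \<and> card T = t \<longrightarrow> card {B\<in>Bs. T \<subseteq> B} = lam)"

definition complete_blocks :: "'a set \<Rightarrow> nat \<Rightarrow> 'a set set" where
  "complete_blocks X k = {B. B \<subseteq> X \<and> card B = k}"

definition cdist :: "nat \<Rightarrow> nat \<Rightarrow> nat \<Rightarrow> nat" where
  "cdist N h j = min (nat \<bar>int h - int j\<bar>) (N - nat \<bar>int h - int j\<bar>)"

text \<open>Y \<times> [u]: empty for u = 0, Y for u = 1.\<close>
definition times01 :: "'b set \<Rightarrow> nat \<Rightarrow> 'b set" where
  "times01 Y u = (if u = 0 then {} else Y)"

definition is_class_partition :: "'b set \<Rightarrow> nat \<Rightarrow> (nat \<Rightarrow> 'b set) \<Rightarrow> bool" where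
  "is_class_partition Bs n C \<longleftrightarrow>
     (\<forall>h\<in>{1..n}. C h \<noteq> {}) \<and>
     (\<forall>h\<in>{1..n}. \<forall>h'\<in>{1..n}. h \<noteq> h' \<longrightarrow> C h \<inter> C h' = {}) \<and>
     (\<Union>h\<in>{1..n}. C h) = Bs"

end

theory Submission
  imports Defs
begin

text \<open>
  Write a block of type \<open>(i, k - i)\<close> as \<open>B \<union> B'\<close> with \<open>B \<subseteq> X1\<close> and \<open>B' \<subseteq> X2\<close>. A \<open>t\<close>-set \<open>T\<close>
  meeting \<open>X1\<close> in \<open>r\<close> points lies in \<open>B \<union> B'\<close> iff \<open>T \<inter> X1 \<subseteq> B\<close> and \<open>T \<inter> X2 \<subseteq> B'\<close>, so a full
  product layer contributes \<open>lam i r * lamb (k - i) (t - r)\<close> blocks through \<open>T\<close>. In a layer of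
  \<open>R\<close> only pairs of classes \<open>(h, j)\<close> in the cyclic window \<open>eps \<le> d(h, j) \<le> w\<close> contribute.
  Every class index has exactly \<open>z\<close> partners in that window, and condition (ii) forces
  \<open>r \<le> s i\<close> or \<open>t - r \<le> sbar (k - i)\<close>, so one of the two factors is the same for all classes
  and the double sum over the window collapses to \<open>\<Lambda>*\<close>. Blocks of different type meet \<open>X1\<close>
  in different numbers of points, so the layers are disjoint and their counts add up to
  \<open>L(r, t - r) = \<Lambda>\<close>.
\<close>

definition cyclic_window_card :: "nat \<Rightarrow> nat \<Rightarrow> nat \<Rightarrow> nat" where
  "cyclic_window_card N eps w = (if 2 * w < N then 2 * w + 1 - eps else 2 * w - eps)"

lemma card_cyclic_window_residues:
  fixes eps w N :: nat
  assumes "0 < N" "eps \<le> 1" "eps \<le> w" "2 * w \<le> N"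
  shows "card {m. m < N \<and> eps \<le> min m (N - m) \<and> min m (N - m) \<le> w} = cyclic_window_card N eps w"
proof -
  have window: "{m. m < N \<and> eps \<le> min m (N - m) \<and> min m (N - m) \<le> w} = {eps..w} \<union> {N - w..<N}"
    using assms by auto
  show ?thesis
  proof (cases "2 * w < N")
    case True
    then have "{eps..w} \<inter> {N - w..<N} = {}" by auto
    then show ?thesis
      unfolding window using True assms by (simp add: card_Un_disjoint cyclic_window_card_def)
  next
    case False
    then have "{eps..w} \<union> {N - w..<N} = {eps..<2 * w}" using assms by auto
    then show ?thesis unfolding window using False by (simp add: cyclic_window_card_def)
  qed
qed

lemma cdist_sym: "cdist N h j = cdist N j h"
  unfolding cdist_def by (simp add: abs_minus_commute)

lemma residue_shift:
  fixes h j N :: nat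
  assumes "h \<in> {1..N}" "j \<in> {1..N}"
  shows "(h + N - j) mod N = (if j \<le> h then h - j else h + N - j)"
proof (cases "j \<le> h")
  case True
  then have "h + N - j = (h - j) + N" by arith
  then have "(h + N - j) mod N = (h - j) mod N" by simp
  also have "\<dots> = h - j" using assms by (intro mod_less) auto
  finally show ?thesis using True by simp
qed (use assms in simp)

lemma cdist_eq_residue:
  fixes h j N :: nat
  assumes "h \<in> {1..N}" "j \<in> {1..N}"
  shows "cdist N h j = min ((h + N - j) mod N) (N - (h + N - j) mod N)"
  using assms by (auto simp: residue_shift cdist_def min_def)

lemma bij_betw_residue_shift:
  fixes j N :: nat
  assumes "j \<in> {1..N}"
  shows "bij_betw (\<lambda>h. (h + N - j) mod N) {1..N} {..<N}"
proof -
  have "inj_on (\<lambda>h. (h + N - j) mod N) {1..N}"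
  proof (rule inj_onI)
    fix h h' assume "h \<in> {1..N}" "h' \<in> {1..N}" "(h + N - j) mod N = (h' + N - j) mod N"
    then show "h = h'" using assms by (auto simp: residue_shift split: if_splits)
  qed
  moreover have "(\<lambda>h. (h + N - j) mod N) ` {1..N} \<subseteq> {..<N}" using assms by auto
  ultimately show ?thesis by (simp add: bij_betw_def card_subset_eq card_image)
qed

lemma card_cyclic_window:
  assumes "j \<in> {1..N}" "eps \<le> 1" "eps \<le> w" "w \<le> N div 2"
  shows "card {h\<in>{1..N}. eps \<le> cdist N h j \<and> cdist N h j \<le> w} = cyclic_window_card N eps w"
proof -
  let ?Q = "\<lambda>m. eps \<le> min m (N - m) \<and> min m (N - m) \<le> w"
  have "bij_betw (\<lambda>h. (h + N - j) mod N)
          {h\<in>{1..N}. eps \<le> cdist N h j \<and> cdist N h j \<le> w} {m\<in>{..<N}. ?Q m}"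
    by (rule bij_betw_Collect[OF bij_betw_residue_shift[OF assms(1)]])
       (simp add: cdist_eq_residue[OF _ assms(1)])
  then have "card {h\<in>{1..N}. eps \<le> cdist N h j \<and> cdist N h j \<le> w} = card {m. m < N \<and> ?Q m}"
    by (simp add: bij_betw_same_card)
  also have "\<dots> = cyclic_window_card N eps w"
    using assms by (intro card_cyclic_window_residues) auto
  finally show ?thesis .
qed

lemma sum_cyclic_window_const_left:
  fixes a b :: "nat \<Rightarrow> nat"
  assumes "eps \<le> 1" "eps \<le> w" "w \<le> N div 2" and a: "\<And>h. h \<in> {1..N} \<Longrightarrow> a h = \<alpha>"
  shows "(\<Sum>h\<in>{1..N}. \<Sum>j\<in>{1..N}. if eps \<le> cdist N h j \<and> cdist N h j \<le> w then a h * b j else 0)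
         = \<alpha> * cyclic_window_card N eps w * (\<Sum>j\<in>{1..N}. b j)"
proof -
  have "(\<Sum>h\<in>{1..N}. \<Sum>j\<in>{1..N}. if eps \<le> cdist N h j \<and> cdist N h j \<le> w then a h * b j else 0)
      = (\<Sum>j\<in>{1..N}. \<Sum>h\<in>{1..N}. if eps \<le> cdist N h j \<and> cdist N h j \<le> w then \<alpha> * b j else 0)"
    using a by (subst sum.swap) (intro sum.cong refl, auto)
  also have "\<dots> = (\<Sum>j\<in>{1..N}. cyclic_window_card N eps w * (\<alpha> * b j))"
  proof (rule sum.cong[OF refl])
    fix j assume "j \<in> {1..N}"
    then show "(\<Sum>h\<in>{1..N}. if eps \<le> cdist N h j \<and> cdist N h j \<le> w then \<alpha> * b j else 0)
             = cyclic_window_card N eps w * (\<alpha> * b j)"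
      using assms(1-3)
      by (simp only: sum.inter_filter[OF finite_atLeastAtMost, symmetric] sum_constant of_nat_id
          card_cyclic_window)
  qed
  finally show ?thesis by (simp add: sum_distrib_left mult_ac)
qed

lemma sum_cyclic_window_const_right:
  fixes a b :: "nat \<Rightarrow> nat"
  assumes "eps \<le> 1" "eps \<le> w" "w \<le> N div 2" and b: "\<And>j. j \<in> {1..N} \<Longrightarrow> b j = \<beta>"
  shows "(\<Sum>h\<in>{1..N}. \<Sum>j\<in>{1..N}. if eps \<le> cdist N h j \<and> cdist N h j \<le> w then a h * b j else 0)
         = \<beta> * cyclic_window_card N eps w * (\<Sum>h\<in>{1..N}. a h)"
proof -
  have "(\<Sum>h\<in>{1..N}. \<Sum>j\<in>{1..N}. if eps \<le> cdist N h j \<and> cdist N h j \<le> w then a h * b j else 0)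
      = (\<Sum>j\<in>{1..N}. \<Sum>h\<in>{1..N}. if eps \<le> cdist N j h \<and> cdist N j h \<le> w then b j * a h else 0)"
    by (subst sum.swap, intro sum.cong refl) (auto simp: cdist_sym[of N _ ] mult.commute)
  also have "\<dots> = \<beta> * cyclic_window_card N eps w * (\<Sum>h\<in>{1..N}. a h)"
    using assms by (rule sum_cyclic_window_const_left)
  finally show ?thesis .
qed

definition product_joins :: "'a set set \<Rightarrow> 'a set set \<Rightarrow> 'a set set" where
  "product_joins D Db = {B \<union> Bb | B Bb. B \<in> D \<and> Bb \<in> Db}"

definition window_joins ::
    "(nat \<Rightarrow> 'a set set) \<Rightarrow> (nat \<Rightarrow> 'a set set) \<Rightarrow> nat \<Rightarrow> nat \<Rightarrow> nat \<Rightarrow> 'a set set" where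
  "window_joins A Ab N eps w = {B \<union> Bb | B Bb. \<exists>h\<in>{1..N}. \<exists>j\<in>{1..N}.
      B \<in> A h \<and> Bb \<in> Ab j \<and> eps \<le> cdist N h j \<and> cdist N h j \<le> w}"

lemma card_joins_containing:
  assumes "X1 \<inter> X2 = {}" "T \<subseteq> X1 \<union> X2" and parts: "\<And>B Bb. P B Bb \<Longrightarrow> B \<subseteq> X1 \<and> Bb \<subseteq> X2"
  shows "card {x \<in> {B \<union> Bb | B Bb. P B Bb}. T \<subseteq> x}
       = card {(B, Bb). P B Bb \<and> T \<inter> X1 \<subseteq> B \<and> T \<inter> X2 \<subseteq> Bb}"
proof -
  let ?pairs = "{(B, Bb). P B Bb \<and> T \<inter> X1 \<subseteq> B \<and> T \<inter> X2 \<subseteq> Bb}"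
  have recover: "B = (B \<union> Bb) \<inter> X1" "Bb = (B \<union> Bb) \<inter> X2" if "P B Bb" for B Bb
    using parts[OF that] assms(1) by auto
  have "inj_on (\<lambda>(B, Bb). B \<union> Bb) ?pairs"
  proof (rule inj_onI, clarify)
    fix B Bb B' Bb' assume "P B Bb" "P B' Bb'" "B \<union> Bb = B' \<union> Bb'"
    then show "B = B' \<and> Bb = Bb'" using recover by metis
  qed
  moreover have "{x \<in> {B \<union> Bb | B Bb. P B Bb}. T \<subseteq> x} = (\<lambda>(B, Bb). B \<union> Bb) ` ?pairs"
  proof (rule set_eqI, rule iffI)
    fix x assume "x \<in> {x \<in> {B \<union> Bb | B Bb. P B Bb}. T \<subseteq> x}"
    then obtain B Bb where x: "x = B \<union> Bb" "P B Bb" "T \<subseteq> x" by blast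
    then have "T \<inter> X1 \<subseteq> B" "T \<inter> X2 \<subseteq> Bb" using recover[OF x(2)] by blast+
    then show "x \<in> (\<lambda>(B, Bb). B \<union> Bb) ` ?pairs" using x by (auto intro!: image_eqI[where x = "(B, Bb)"])
  next
    fix x assume "x \<in> (\<lambda>(B, Bb). B \<union> Bb) ` ?pairs"
    then show "x \<in> {x \<in> {B \<union> Bb | B Bb. P B Bb}. T \<subseteq> x}" using assms(2) by auto
  qed
  ultimately show ?thesis by (simp add: card_image)
qed

lemma card_product_joins_containing:
  assumes "X1 \<inter> X2 = {}" "T \<subseteq> X1 \<union> X2" "D \<subseteq> Pow X1" "Db \<subseteq> Pow X2"
  shows "card {x \<in> product_joins D Db. T \<subseteq> x}
       = card {B \<in> D. T \<inter> X1 \<subseteq> B} * card {Bb \<in> Db. T \<inter> X2 \<subseteq> Bb}"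
proof -
  have "card {x \<in> product_joins D Db. T \<subseteq> x}
      = card {(B, Bb). (B \<in> D \<and> Bb \<in> Db) \<and> T \<inter> X1 \<subseteq> B \<and> T \<inter> X2 \<subseteq> Bb}"
    unfolding product_joins_def using assms by (intro card_joins_containing) auto
  also have "{(B, Bb). (B \<in> D \<and> Bb \<in> Db) \<and> T \<inter> X1 \<subseteq> B \<and> T \<inter> X2 \<subseteq> Bb}
           = {B \<in> D. T \<inter> X1 \<subseteq> B} \<times> {Bb \<in> Db. T \<inter> X2 \<subseteq> Bb}" by auto
  finally show ?thesis by (simp add: card_cartesian_product)
qed

lemma class_partition_finite:
  assumes "finite Bs" "is_class_partition Bs N C" "h \<in> {1..N}"
  shows "finite (C h)"
  using assms unfolding is_class_partition_def by (auto intro: finite_subset)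

lemma sum_card_classes:
  assumes "finite Bs" "is_class_partition Bs N C"
  shows "(\<Sum>h\<in>{1..N}. card {B \<in> C h. P B}) = card {B \<in> Bs. P B}"
proof -
  have "{B \<in> Bs. P B} = (\<Union>h\<in>{1..N}. {B \<in> C h. P B})"
    using assms(2) unfolding is_class_partition_def by auto
  moreover have "card (\<Union>h\<in>{1..N}. {B \<in> C h. P B}) = (\<Sum>h\<in>{1..N}. card {B \<in> C h. P B})"
  proof (rule card_UN_disjoint)
    show "\<forall>h\<in>{1..N}. \<forall>h'\<in>{1..N}. h \<noteq> h' \<longrightarrow> {B \<in> C h. P B} \<inter> {B \<in> C h'. P B} = {}"
      using assms(2) unfolding is_class_partition_def by auto
  qed (use class_partition_finite[OF assms] in auto)
  ultimately show ?thesis by simp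
qed

lemma card_pairs_of_related_classes:
  assumes "finite D" "is_class_partition D N A" "finite Db" "is_class_partition Db N Ab"
  shows "card {(B, Bb). (\<exists>h\<in>{1..N}. \<exists>j\<in>{1..N}. B \<in> A h \<and> Bb \<in> Ab j \<and> c h j) \<and> P B \<and> Q Bb}
       = (\<Sum>h\<in>{1..N}. \<Sum>j\<in>{1..N}.
            if c h j then card {B \<in> A h. P B} * card {Bb \<in> Ab j. Q Bb} else 0)"
proof -
  define S where "S h j = (if c h j then {B \<in> A h. P B} \<times> {Bb \<in> Ab j. Q Bb} else {})" for h j
  have pairs: "{(B, Bb). (\<exists>h\<in>{1..N}. \<exists>j\<in>{1..N}. B \<in> A h \<and> Bb \<in> Ab j \<and> c h j) \<and> P B \<and> Q Bb}
      = (\<Union>h\<in>{1..N}. \<Union>j\<in>{1..N}. S h j)"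
    unfolding S_def by (auto split: if_splits)
  have fin: "finite (S h j)" if "h \<in> {1..N}" "j \<in> {1..N}" for h j
    using class_partition_finite[OF assms(1,2) that(1)] class_partition_finite[OF assms(3,4) that(2)]
    unfolding S_def by auto
  have card_S: "card (S h j) = (if c h j then card {B \<in> A h. P B} * card {Bb \<in> Ab j. Q Bb} else 0)" for h j
    unfolding S_def by (simp add: card_cartesian_product)
  have inner: "card (\<Union>j\<in>{1..N}. S h j) = (\<Sum>j\<in>{1..N}. card (S h j))" if "h \<in> {1..N}" for h
  proof (rule card_UN_disjoint)
    show "\<forall>j\<in>{1..N}. finite (S h j)" using fin that by blast
    show "\<forall>j\<in>{1..N}. \<forall>j'\<in>{1..N}. j \<noteq> j' \<longrightarrow> S h j \<inter> S h j' = {}"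
      using assms(4) unfolding S_def is_class_partition_def by (auto simp: disjoint_iff)
  qed simp
  have outer: "card (\<Union>h\<in>{1..N}. \<Union>j\<in>{1..N}. S h j) = (\<Sum>h\<in>{1..N}. card (\<Union>j\<in>{1..N}. S h j))"
  proof (rule card_UN_disjoint)
    show "\<forall>h\<in>{1..N}. finite (\<Union>j\<in>{1..N}. S h j)" using fin by blast
    show "\<forall>h\<in>{1..N}. \<forall>h'\<in>{1..N}. h \<noteq> h' \<longrightarrow> (\<Union>j\<in>{1..N}. S h j) \<inter> (\<Union>j\<in>{1..N}. S h' j) = {}"
      using assms(2) unfolding S_def is_class_partition_def by (auto simp: disjoint_iff)
  qed simp
  show ?thesis unfolding pairs outer using inner card_S by simp
qed

lemma window_joins_subset_product_joins:
  assumes "is_class_partition D N A" "is_class_partition Db N Ab"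
  shows "window_joins A Ab N eps w \<subseteq> product_joins D Db"
  using assms unfolding window_joins_def product_joins_def is_class_partition_def by blast

lemma product_joins_graded:
  assumes "X1 \<inter> X2 = {}" "finite X1" "finite X2"
    and "\<forall>B\<in>D. B \<subseteq> X1 \<and> card B = i" "\<forall>Bb\<in>Db. Bb \<subseteq> X2 \<and> card Bb = j"
    and "x \<in> product_joins D Db"
  shows "x \<subseteq> X1 \<union> X2 \<and> card x = i + j \<and> card (x \<inter> X1) = i"
proof -
  obtain B Bb where x: "x = B \<union> Bb" "B \<in> D" "Bb \<in> Db"
    using assms(6) unfolding product_joins_def by blast
  then have B: "B \<subseteq> X1" "card B = i" and Bb: "Bb \<subseteq> X2" "card Bb = j"
    using assms(4,5) by auto
  have "card x = card B + card Bb"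
    unfolding x(1) using B Bb assms(1-3) by (intro card_Un_disjoint) (auto intro: finite_subset)
  moreover have "x \<inter> X1 = B" using x(1) B Bb assms(1) by auto
  ultimately show ?thesis using x(1) B Bb by auto
qed

lemma card_window_joins_containing:
  assumes "X1 \<inter> X2 = {}" "T \<subseteq> X1 \<union> X2" "finite D" "D \<subseteq> Pow X1" "finite Db" "Db \<subseteq> Pow X2"
    and "is_class_partition D N A" "is_class_partition Db N Ab"
  shows "card {x \<in> window_joins A Ab N eps w. T \<subseteq> x}
       = (\<Sum>h\<in>{1..N}. \<Sum>j\<in>{1..N}. if eps \<le> cdist N h j \<and> cdist N h j \<le> w
            then card {B \<in> A h. T \<inter> X1 \<subseteq> B} * card {Bb \<in> Ab j. T \<inter> X2 \<subseteq> Bb} else 0)"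
proof -
  have "card {x \<in> window_joins A Ab N eps w. T \<subseteq> x}
      = card {(B, Bb). (\<exists>h\<in>{1..N}. \<exists>j\<in>{1..N}. B \<in> A h \<and> Bb \<in> Ab j \<and> eps \<le> cdist N h j \<and> cdist N h j \<le> w)
                       \<and> T \<inter> X1 \<subseteq> B \<and> T \<inter> X2 \<subseteq> Bb}"
    unfolding window_joins_def using assms(1,2,4,6-8)
    by (intro card_joins_containing) (auto simp: is_class_partition_def)
  also have "\<dots> = (\<Sum>h\<in>{1..N}. \<Sum>j\<in>{1..N}. if eps \<le> cdist N h j \<and> cdist N h j \<le> w
            then card {B \<in> A h. T \<inter> X1 \<subseteq> B} * card {Bb \<in> Ab j. T \<inter> X2 \<subseteq> Bb} else 0)"
    by (rule card_pairs_of_related_classes[OF assms(3,7,5,8)])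
  finally show ?thesis .
qed

lemma card_window_joins_containing_cases:
  assumes "X1 \<inter> X2 = {}" "T \<subseteq> X1 \<union> X2" "finite D" "D \<subseteq> Pow X1" "finite Db" "Db \<subseteq> Pow X2"
    and A: "is_class_partition D N A" and Ab: "is_class_partition Db N Ab"
    and window: "eps \<le> 1" "eps \<le> w" "w \<le> N div 2"
    and D_count: "card {B \<in> D. T \<inter> X1 \<subseteq> B} = l"
    and Db_count: "card {Bb \<in> Db. T \<inter> X2 \<subseteq> Bb} = lb"
    and A_count: "\<And>h. P \<Longrightarrow> h \<in> {1..N} \<Longrightarrow> card {B \<in> A h. T \<inter> X1 \<subseteq> B} = lS"
    and Ab_count: "\<And>j. Q \<Longrightarrow> j \<in> {1..N} \<Longrightarrow> card {Bb \<in> Ab j. T \<inter> X2 \<subseteq> Bb} = lSb"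
    and "P \<or> Q"
  shows "card {x \<in> window_joins A Ab N eps w. T \<subseteq> x}
       = (let z = cyclic_window_card N eps w in
          if P \<and> Q then lS * lSb * N * z else if P then lS * lb * z else l * lSb * z)"
proof -
  let ?z = "cyclic_window_card N eps w"
  let ?a = "\<lambda>h. card {B \<in> A h. T \<inter> X1 \<subseteq> B}" and ?b = "\<lambda>j. card {Bb \<in> Ab j. T \<inter> X2 \<subseteq> Bb}"
  have count: "card {x \<in> window_joins A Ab N eps w. T \<subseteq> x}
      = (\<Sum>h\<in>{1..N}. \<Sum>j\<in>{1..N}. if eps \<le> cdist N h j \<and> cdist N h j \<le> w then ?a h * ?b j else 0)"
    using assms(1-8) by (rule card_window_joins_containing)
  have sum_a: "(\<Sum>h\<in>{1..N}. ?a h) = l" using sum_card_classes[OF assms(3) A] D_count by simp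
  have sum_b: "(\<Sum>j\<in>{1..N}. ?b j) = lb" using sum_card_classes[OF assms(5) Ab] Db_count by simp
  show ?thesis
  proof (cases P)
    case True
    then have "card {x \<in> window_joins A Ab N eps w. T \<subseteq> x} = lS * ?z * (\<Sum>j\<in>{1..N}. ?b j)"
      unfolding count using window A_count by (intro sum_cyclic_window_const_left)
    moreover have "(\<Sum>j\<in>{1..N}. ?b j) = N * lSb" if Q using Ab_count[OF that] by simp
    ultimately show ?thesis using True sum_b by (simp add: Let_def mult_ac)
  next
    case False
    then have "card {x \<in> window_joins A Ab N eps w. T \<subseteq> x} = lSb * ?z * (\<Sum>h\<in>{1..N}. ?a h)"
      unfolding count using window Ab_count \<open>P \<or> Q\<close> by (intro sum_cyclic_window_const_right) auto
    then show ?thesis using False sum_a by (simp add: Let_def mult_ac)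
  qed
qed

lemma card_times01_filter: "u \<le> 1 \<Longrightarrow> card {x \<in> times01 Y u. P x} = u * card {x \<in> Y. P x}"
  by (cases "u = 0") (auto simp: times01_def)

lemma is_design_UN_graded:
  fixes G :: "nat \<Rightarrow> 'a set set"
  assumes "finite X" "finite I"
    and graded: "\<And>i x. i \<in> I \<Longrightarrow> x \<in> G i \<Longrightarrow> x \<subseteq> X \<and> card x = k \<and> card (x \<inter> Y) = i"
    and count: "\<And>T. T \<subseteq> X \<Longrightarrow> card T = t \<Longrightarrow> (\<Sum>i\<in>I. card {x \<in> G i. T \<subseteq> x}) = Lam"
  shows "is_design X k t Lam (\<Union>i\<in>I. G i)"
  unfolding is_design_def
proof (intro conjI allI impI)
  show "finite X" by fact
  show "\<forall>x\<in>(\<Union>i\<in>I. G i). x \<subseteq> X \<and> card x = k" using graded by blast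
  fix T assume T: "T \<subseteq> X \<and> card T = t"
  have fin: "finite (G i)" if "i \<in> I" for i
    using graded[OF that] assms(1) by (meson Pow_iff finite_Pow_iff finite_subset subsetI)
  have "{x \<in> (\<Union>i\<in>I. G i). T \<subseteq> x} = (\<Union>i\<in>I. {x \<in> G i. T \<subseteq> x})" by blast
  also have "card \<dots> = (\<Sum>i\<in>I. card {x \<in> G i. T \<subseteq> x})"
  proof (rule card_UN_disjoint)
    show "\<forall>i\<in>I. finite {x \<in> G i. T \<subseteq> x}" using fin by auto
    show "\<forall>i\<in>I. \<forall>j\<in>I. i \<noteq> j \<longrightarrow> {x \<in> G i. T \<subseteq> x} \<inter> {x \<in> G j. T \<subseteq> x} = {}"
      using graded by (auto simp: disjoint_iff)
  qed fact
  finally show "card {x \<in> (\<Union>i\<in>I. G i). T \<subseteq> x} = Lam" using count T by simp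
qed

locale joined_designs =
  fixes X1 X2 :: "'a set" and k t :: nat
    and D Dbar :: "nat \<Rightarrow> 'a set set" and lam lamb :: "nat \<Rightarrow> nat \<Rightarrow> nat"
    and R :: "nat set" and N s sbar :: "nat \<Rightarrow> nat"
    and A Abar :: "nat \<Rightarrow> nat \<Rightarrow> 'a set set" and lamS lamSb :: "nat \<Rightarrow> nat \<Rightarrow> nat"
    and eps w :: "nat \<Rightarrow> nat"
  assumes finite_X1: "finite X1" and finite_X2: "finite X2" and disjoint: "X1 \<inter> X2 = {}"
    and D_blocks: "i \<le> k \<Longrightarrow> B \<in> D i \<Longrightarrow> B \<subseteq> X1 \<and> card B = i"
    and Dbar_blocks: "i \<le> k \<Longrightarrow> B \<in> Dbar i \<Longrightarrow> B \<subseteq> X2 \<and> card B = i"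
    and lam: "i \<le> k \<Longrightarrow> r \<le> t \<Longrightarrow> T \<subseteq> X1 \<Longrightarrow> card T = r \<Longrightarrow> card {B \<in> D i. T \<subseteq> B} = lam i r"
    and lamb: "i \<le> k \<Longrightarrow> r \<le> t \<Longrightarrow> T \<subseteq> X2 \<Longrightarrow> card T = r \<Longrightarrow> card {B \<in> Dbar i. T \<subseteq> B} = lamb i r"
    and R_sub: "R \<subseteq> {0..k}"
    and classes: "i \<in> R \<Longrightarrow> is_class_partition (D i) (N i) (A i)"
    and classes_bar: "i \<in> R \<Longrightarrow> is_class_partition (Dbar (k - i)) (N i) (Abar (k - i))"
    and lamS: "i \<in> R \<Longrightarrow> h \<in> {1..N i} \<Longrightarrow> r \<le> s i \<Longrightarrow> T \<subseteq> X1 \<Longrightarrow> card T = r \<Longrightarrow>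
                 card {B \<in> A i h. T \<subseteq> B} = lamS i r"
    and lamSb: "i \<in> R \<Longrightarrow> j \<in> {1..N i} \<Longrightarrow> r \<le> sbar (k - i) \<Longrightarrow> T \<subseteq> X2 \<Longrightarrow> card T = r \<Longrightarrow>
                 card {B \<in> Abar (k - i) j. T \<subseteq> B} = lamSb (k - i) r"
    and strengths: "i \<in> R \<Longrightarrow> 2 * (t div 2) \<le> s i + sbar (k - i)"
    and window: "i \<in> R \<Longrightarrow> eps i \<le> 1 \<and> eps i \<le> w i \<and> w i \<le> N i div 2"
begin

text \<open>\<open>layer i\<close> is the paper's block family of type \<open>(i, k - i)\<close> before the choice of \<open>u i\<close>, and
  \<open>layer_index i r\<close> the number of its blocks through a \<open>t\<close>-set meeting \<open>X1\<close> in \<open>r\<close> points: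
  \<open>\<Lambda>*\<close> for \<open>i \<in> R\<close>, the product of the two indices otherwise.\<close>

definition layer :: "nat \<Rightarrow> 'a set set" where
  "layer i = (if i \<in> R then window_joins (A i) (Abar (k - i)) (N i) (eps i) (w i)
              else product_joins (D i) (Dbar (k - i)))"

definition layer_index :: "nat \<Rightarrow> nat \<Rightarrow> nat" where
  "layer_index i r =
     (if i \<in> R then
        (let z = cyclic_window_card (N i) (eps i) (w i) in
         if r \<le> s i \<and> t - r \<le> sbar (k - i) then lamS i r * lamSb (k - i) (t - r) * N i * z
         else if r \<le> s i then lamS i r * lamb (k - i) (t - r) * z
         else lam i r * lamSb (k - i) (t - r) * z)
      else lam i r * lamb (k - i) (t - r))"

lemma D_Pow: "i \<le> k \<Longrightarrow> D i \<subseteq> Pow X1"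
  using D_blocks by blast

lemma Dbar_Pow: "Dbar (k - i) \<subseteq> Pow X2"
  using Dbar_blocks[of "k - i"] by auto

lemma finite_D: "i \<le> k \<Longrightarrow> finite (D i)"
  using D_Pow finite_X1 by (meson finite_Pow_iff finite_subset)

lemma finite_Dbar: "finite (Dbar (k - i))"
  using Dbar_Pow finite_X2 by (meson finite_Pow_iff finite_subset)

lemma layer_graded:
  assumes "i \<le> k" "x \<in> layer i"
  shows "x \<subseteq> X1 \<union> X2 \<and> card x = k \<and> card (x \<inter> X1) = i"
proof -
  have x: "x \<in> product_joins (D i) (Dbar (k - i))"
  proof (cases "i \<in> R")
    case True
    then show ?thesis
      using assms(2) window_joins_subset_product_joins[OF classes[OF True] classes_bar[OF True]]
      unfolding layer_def by auto
  qed (use assms(2) in \<open>simp add: layer_def\<close>)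
  have "\<forall>B\<in>D i. B \<subseteq> X1 \<and> card B = i" using D_blocks[OF assms(1)] by blast
  moreover have "\<forall>Bb\<in>Dbar (k - i). Bb \<subseteq> X2 \<and> card Bb = k - i" using Dbar_blocks[of "k - i"] by auto
  ultimately have "x \<subseteq> X1 \<union> X2 \<and> card x = i + (k - i) \<and> card (x \<inter> X1) = i"
    by (rule product_joins_graded[OF disjoint finite_X1 finite_X2 _ _ x])
  then show ?thesis using assms(1) by simp
qed

lemma card_layer_containing:
  assumes "i \<le> k" "T \<subseteq> X1 \<union> X2" "card T = t"
  shows "card {x \<in> layer i. T \<subseteq> x} = layer_index i (card (T \<inter> X1))"
proof -
  define r where "r = card (T \<inter> X1)"
  have "T = (T \<inter> X1) \<union> (T \<inter> X2)" using assms(2) by auto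
  moreover have "card ((T \<inter> X1) \<union> (T \<inter> X2)) = card (T \<inter> X1) + card (T \<inter> X2)"
    using finite_X1 finite_X2 disjoint by (intro card_Un_disjoint) auto
  ultimately have "t = r + card (T \<inter> X2)" using assms(3) unfolding r_def by simp
  then have r: "r \<le> t" "card (T \<inter> X2) = t - r" by auto
  have D_count: "card {B \<in> D i. T \<inter> X1 \<subseteq> B} = lam i r"
    using lam assms(1) r(1) r_def by simp
  have Dbar_count: "card {Bb \<in> Dbar (k - i). T \<inter> X2 \<subseteq> Bb} = lamb (k - i) (t - r)"
    using lamb r by simp
  show ?thesis
  proof (cases "i \<in> R")
    case True
    have "2 * (t div 2) \<le> s i + sbar (k - i)" using strengths True .
    \<comment> \<open>otherwise \<open>t = r + (t - r) \<ge> s i + sbar (k - i) + 2 > t\<close>\<close>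
    then have "r \<le> s i \<or> t - r \<le> sbar (k - i)" using r(1) by presburger
    moreover have "eps i \<le> 1" "eps i \<le> w i" "w i \<le> N i div 2" using window[OF True] by auto
    ultimately have "card {x \<in> window_joins (A i) (Abar (k - i)) (N i) (eps i) (w i). T \<subseteq> x}
        = (let z = cyclic_window_card (N i) (eps i) (w i) in
           if r \<le> s i \<and> t - r \<le> sbar (k - i) then lamS i r * lamSb (k - i) (t - r) * N i * z
           else if r \<le> s i then lamS i r * lamb (k - i) (t - r) * z
           else lam i r * lamSb (k - i) (t - r) * z)"
      using lamS[OF True _ _ Int_lower2] lamSb[OF True _ _ Int_lower2] r r_def
      by (intro card_window_joins_containing_cases[OF disjoint assms(2) finite_D[OF assms(1)] D_Pow[OF assms(1)]
            finite_Dbar Dbar_Pow classes[OF True] classes_bar[OF True] _ _ _ D_count Dbar_count]) auto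
    then have "card {x \<in> window_joins (A i) (Abar (k - i)) (N i) (eps i) (w i). T \<subseteq> x} = layer_index i r"
      by (simp only: layer_index_def if_P[OF True])
    then show ?thesis using True unfolding layer_def r_def by simp
  next
    case False
    then show ?thesis
      using card_product_joins_containing[OF disjoint assms(2) D_Pow[OF assms(1)] Dbar_Pow] D_count Dbar_count assms(1)
      unfolding layer_def layer_index_def r_def by simp
  qed
qed

theorem is_design_layers:
  assumes "\<And>i. i \<le> k \<Longrightarrow> u i \<le> 1"
    and "\<And>r. r \<le> t \<Longrightarrow> (\<Sum>i\<in>{0..k}. u i * layer_index i r) = Lam"
  shows "is_design (X1 \<union> X2) k t Lam (\<Union>i\<in>{0..k}. times01 (layer i) (u i))"
proof (rule is_design_UN_graded)
  show "finite (X1 \<union> X2)" using finite_X1 finite_X2 by simp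
  show "x \<subseteq> X1 \<union> X2 \<and> card x = k \<and> card (x \<inter> X1) = i" if "i \<in> {0..k}" "x \<in> times01 (layer i) (u i)" for i x
    using that layer_graded by (auto simp: times01_def split: if_splits)
  fix T assume T: "T \<subseteq> X1 \<union> X2" "card T = t"
  have "card (T \<inter> X1) \<le> t"
    using T finite_X1 finite_X2 by (metis card_mono finite_Un finite_subset Int_lower1)
  then show "(\<Sum>i\<in>{0..k}. card {x \<in> times01 (layer i) (u i). T \<subseteq> x}) = Lam"
    using assms T by (simp add: card_times01_filter card_layer_containing)
qed simp

end

theorem theorem3p1:
  fixes X X1 X2 :: "'a set"
    and k t :: nat
    and D Dbar :: "nat \<Rightarrow> 'a set set"
    and lam lamb :: "nat \<Rightarrow> nat \<Rightarrow> nat"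
    and R :: "nat set"
    and N Nbar s sbar :: "nat \<Rightarrow> nat"
    and A Abar :: "nat \<Rightarrow> nat \<Rightarrow> 'a set set"
    and lamS lamSb :: "nat \<Rightarrow> nat \<Rightarrow> nat"
    and eps w z u :: "nat \<Rightarrow> nat"
    and Lam :: nat
  assumes fin: "finite X"
    and part: "X = X1 \<union> X2" "X1 \<inter> X2 = {}" "X1 \<noteq> {}" "X2 \<noteq> {}"
    and params: "card X > k" "k > t" "t \<ge> 2"
    and D_small: "\<forall>i\<le>t. D i = complete_blocks X1 i"
    and D_big: "\<forall>i. t < i \<and> i \<le> k \<longrightarrow> is_design X1 i t (lam i t) (D i)"
    and Dbar_small: "\<forall>i\<le>t. Dbar i = complete_blocks X2 i"
    and Dbar_big: "\<forall>i. t < i \<and> i \<le> k \<longrightarrow> is_design X2 i t (lamb i t) (Dbar i)"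
    and lam_def: "\<forall>i\<le>k. \<forall>r\<le>t. \<forall>T. T \<subseteq> X1 \<and> card T = r \<longrightarrow> card {B\<in>D i. T \<subseteq> B} = lam i r"
    and lamb_def: "\<forall>i\<le>k. \<forall>r\<le>t. \<forall>T. T \<subseteq> X2 \<and> card T = r \<longrightarrow> card {B\<in>Dbar i. T \<subseteq> B} = lamb i r"
    and R_sub: "R \<subseteq> {0..k}"
    and R_part: "\<forall>i\<in>R. is_class_partition (D i) (N i) (A i)
                     \<and> is_class_partition (Dbar (k - i)) (Nbar (k - i)) (Abar (k - i))"
    and R_cls: "\<forall>i\<in>R. (\<forall>h\<in>{1..N i}. is_design X1 i (s i) (lamS i (s i)) (A i h))
                  \<and> (\<forall>j\<in>{1..Nbar (k - i)}.
                       is_design X2 (k - i) (sbar (k - i)) (lamSb (k - i) (sbar (k - i))) (Abar (k - i) j))"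
    and lamS_def: "\<forall>i\<in>R. \<forall>h\<in>{1..N i}. \<forall>r\<le>s i. \<forall>T. T \<subseteq> X1 \<and> card T = r \<longrightarrow>
                     card {B\<in>A i h. T \<subseteq> B} = lamS i r"
    and lamSb_def: "\<forall>i\<in>R. \<forall>j\<in>{1..Nbar (k - i)}. \<forall>r\<le>sbar (k - i). \<forall>T. T \<subseteq> X2 \<and> card T = r \<longrightarrow>
                     card {B\<in>Abar (k - i) j. T \<subseteq> B} = lamSb (k - i) r"
    and R_s: "\<forall>i\<in>R. s i < t \<and> sbar (k - i) < t"
    and R_i: "\<forall>i\<in>R. N i = Nbar (k - i)"
    and R_ii: "\<forall>i\<in>R. s i + sbar (k - i) \<ge> 2 * (t div 2)"
    and eps_w: "\<forall>i\<in>R. eps i \<le> 1 \<and> eps i \<le> w i \<and> w i \<le> N i div 2"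
    and z_def: "\<forall>i\<in>R. z i = (if 2 * w i < N i then 2 * w i + 1 - eps i else 2 * w i - eps i)"
    and u01: "\<forall>i\<le>k. u i \<le> 1"
    and Lpos: "Lam > 0"
    and L_eq: "\<forall>r\<le>t.
         (\<Sum>i\<in>R. u i *
             (if r \<le> s i \<and> t - r \<le> sbar (k - i) then lamS i r * lamSb (k - i) (t - r) * N i * z i
              else if r \<le> s i then lamS i r * lamb (k - i) (t - r) * z i
              else lam i r * lamSb (k - i) (t - r) * z i))
       + (\<Sum>i\<in>{0..k} - R. u i * lam i r * lamb (k - i) (t - r)) = Lam"
  shows "is_design X k t Lam
     ((\<Union>i\<in>R. times01
          {B \<union> Bb | B Bb. \<exists>h\<in>{1..N i}. \<exists>j\<in>{1..N i}.
              B \<in> A i h \<and> Bb \<in> Abar (k - i) j \<and> eps i \<le> cdist (N i) h j \<and> cdist (N i) h j \<le> w i}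
          (u i))
      \<union> (\<Union>i\<in>{0..k} - R. times01 {B \<union> Bb | B Bb. B \<in> D i \<and> Bb \<in> Dbar (k - i)} (u i)))"
proof -
  interpret joined_designs X1 X2 k t D Dbar lam lamb R N s sbar A Abar lamS lamSb eps w
  proof
    show "finite X1" "finite X2" using fin part(1) by auto
    show "B \<subseteq> X1 \<and> card B = i" if "i \<le> k" "B \<in> D i" for i B
      using that D_small D_big[rule_format, of i] by (cases "i \<le> t") (auto simp: complete_blocks_def is_design_def)
    show "B \<subseteq> X2 \<and> card B = i" if "i \<le> k" "B \<in> Dbar i" for i B
      using that Dbar_small Dbar_big[rule_format, of i] by (cases "i \<le> t") (auto simp: complete_blocks_def is_design_def)
  qed (use part(2) lam_def lamb_def R_sub R_part R_i lamS_def lamSb_def R_ii eps_w in auto)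
  have "(\<Sum>i\<in>{0..k}. u i * layer_index i r) = Lam" if "r \<le> t" for r
  proof -
    have "(\<Sum>i\<in>{0..k}. u i * layer_index i r)
        = (\<Sum>i\<in>{0..k}. if i \<in> R then u i *
             (if r \<le> s i \<and> t - r \<le> sbar (k - i) then lamS i r * lamSb (k - i) (t - r) * N i * z i
              else if r \<le> s i then lamS i r * lamb (k - i) (t - r) * z i
              else lam i r * lamSb (k - i) (t - r) * z i)
           else u i * lam i r * lamb (k - i) (t - r))"
      using z_def by (intro sum.cong refl) (simp add: layer_index_def cyclic_window_card_def Let_def)
    also have "\<dots> = Lam"
      using L_eq that by (simp add: sum.If_cases Diff_eq Int_absorb1[OF R_sub])
    finally show ?thesis .
  qed
  then have "is_design X k t Lam (\<Union>i\<in>{0..k}. times01 (layer i) (u i))"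
    using is_design_layers u01 part(1) by simp
  moreover have "(\<Union>i\<in>{0..k}. times01 (layer i) (u i))
      = (\<Union>i\<in>R. times01 (window_joins (A i) (Abar (k - i)) (N i) (eps i) (w i)) (u i))
        \<union> (\<Union>i\<in>{0..k} - R. times01 (product_joins (D i) (Dbar (k - i))) (u i))"
    using R_sub unfolding layer_def by (auto split: if_splits)
  ultimately show ?thesis unfolding window_joins_def product_joins_def by simp
qed

end
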